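(* Let $K\subseteq\mathbb{R}^{n}$ be compact, $T\subseteq\mathbb{R}^{n}$ compact with non-empty interior, $\delta>0$, and let $\Lambda(\delta)\subseteq\mathbb{R}^{n}$ be a finite $\delta$-net for $K+T$. Then \[ M_{\omega}(K,T)\ge M_{\omega}(K,T+\delta B_{2}^{n},\Lambda(\delta)). \]
   Context: $B_2^n$ is the closed Euclidean unit ball; a set $\Lambda$ is a $\delta$-net for $A$ if $A\subseteq\Lambda+\delta B_2^n$. $\mathbbm{1}_A$ is the indicator of $A$. $M_\omega(K,T)$ is the supremum of $\sum_i\omega_i$ over finite families $\{(x_i,\omega_i)\}$ with $x_i\in K$, $\omega_i\ge0$, such that $\sum_i\omega_i\mathbbm{1}_T(x-x_i)\le1$ for all $x\in\mathbb{R}^n$. For a finite set $\Lambda\subseteq\mathbb{R}^n$ and a set $S$, $M_\omega(K,S,\Lambda)$ is the supremum of $\sum_i\omega_i$ over finite families $\{(x_i,\omega_i)\}$ with $x_i\in\Lambda\cap K$, $\omega_i\ge0$, such that $\sum_i\omega_i\mathbbm{1}_S(x-x_i)\le1$ for all $x\in\Lambda$. *)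

theory Defs
  imports "HOL-Analysis.Analysis"
begin

text \<open>A finite family \<open>{(x_i, \<omega>_i)}\<close> is represented as a list of pairs (repetitions allowed).
  Suprema are taken in the extended reals.\<close>

definition M_omega :: "'a::euclidean_space set \<Rightarrow> 'a set \<Rightarrow> ereal" where
  "M_omega K T =
     (SUP xs \<in> {xs :: ('a \<times> real) list.
                 (\<forall>(xi, wi) \<in> set xs. xi \<in> K \<and> 0 \<le> wi) \<and>
                 (\<forall>x. sum_list (map (\<lambda>(xi, wi). wi * indicator T (x - xi)) xs) \<le> 1)}.
        ereal (sum_list (map snd xs)))"

definition M_omega_net :: "'a::euclidean_space set \<Rightarrow> 'a set \<Rightarrow> 'a set \<Rightarrow> ereal" where
  "M_omega_net K S \<Lambda> =
     (SUP xs \<in> {xs :: ('a \<times> real) list.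
                 (\<forall>(xi, wi) \<in> set xs. xi \<in> \<Lambda> \<inter> K \<and> 0 \<le> wi) \<and>
                 (\<forall>x \<in> \<Lambda>. sum_list (map (\<lambda>(xi, wi). wi * indicator S (x - xi)) xs) \<le> 1)}.
        ereal (sum_list (map snd xs)))"

definition is_delta_net :: "'a::euclidean_space set \<Rightarrow> real \<Rightarrow> 'a set \<Rightarrow> bool" where
  "is_delta_net \<Lambda> \<delta> A \<longleftrightarrow> A \<subseteq> \<Lambda> + (\<lambda>v. \<delta> *\<^sub>R v) ` cball 0 1"

end

theory Submission
  imports Defs
begin

text \<open>Every family admissible for the net problem with the thickened body \<open>T + \<delta>B\<close>
  is already admissible for the continuous problem with \<open>T\<close>:
  off \<open>K + T\<close> the overlap count of \<open>T\<close> vanishes, and at a point \<open>x \<in> K + T\<close> it is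
  dominated by the overlap count of \<open>T + \<delta>B\<close> at a net point within distance \<open>\<delta>\<close>
  of \<open>x\<close>. The supremum over the larger family is therefore at least as large.\<close>

definition overlap_count :: "'a::ab_group_add set \<Rightarrow> ('a \<times> real) list \<Rightarrow> 'a \<Rightarrow> real" where
  "overlap_count T xs x = sum_list (map (\<lambda>(xi, wi). wi * indicator T (x - xi)) xs)"

lemma overlap_count_outside_sumset:
  assumes "\<forall>(xi, wi) \<in> set xs. xi \<in> K" and "x \<notin> K + T"
  shows "overlap_count T xs x = 0"
proof -
  have "x - xi \<notin> T" if "xi \<in> K" for xi
    using assms(2) set_plus_intro[OF that, of "x - xi" T] by auto
  then have "map (\<lambda>(xi, wi). wi * indicator T (x - xi)) xs = map (\<lambda>_. 0) xs"
    using assms(1) by (intro map_cong) auto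
  then show ?thesis
    by (simp add: overlap_count_def sum_list_replicate map_replicate_const)
qed

lemma indicator_le_indicator_thickening:
  fixes T :: "'a::real_normed_vector set"
  assumes "v \<in> cball 0 1"
  shows "indicator T (y + \<delta> *\<^sub>R v) \<le> (indicator (T + (\<lambda>v. \<delta> *\<^sub>R v) ` cball 0 1) y :: real)"
proof (cases "y + \<delta> *\<^sub>R v \<in> T")
  case True
  have "\<delta> *\<^sub>R (- v) \<in> (\<lambda>v. \<delta> *\<^sub>R v) ` cball 0 1"
    using assms by (intro imageI) auto
  from set_plus_intro[OF True this] show ?thesis
    by (simp add: algebra_simps)
qed simp

lemma overlap_count_le_thickening:
  fixes l :: "'a::real_normed_vector"
  assumes "\<forall>(xi, wi) \<in> set xs. 0 \<le> wi" and "v \<in> cball 0 1"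
  shows "overlap_count T xs (l + \<delta> *\<^sub>R v)
         \<le> overlap_count (T + (\<lambda>v. \<delta> *\<^sub>R v) ` cball 0 1) xs l"
  unfolding overlap_count_def
proof (intro sum_list_mono)
  fix p assume "p \<in> set xs"
  moreover obtain xi wi where "p = (xi, wi)" by fastforce
  moreover have "indicator T (l - xi + \<delta> *\<^sub>R v)
                 \<le> (indicator (T + (\<lambda>v. \<delta> *\<^sub>R v) ` cball 0 1) (l - xi) :: real)"
    using indicator_le_indicator_thickening[OF assms(2)] .
  ultimately show "(\<lambda>(xi, wi). wi * indicator T (l + \<delta> *\<^sub>R v - xi)) p
      \<le> (\<lambda>(xi, wi). wi * indicator (T + (\<lambda>v. \<delta> *\<^sub>R v) ` cball 0 1) (l - xi)) p"
    using assms(1) by (auto intro: mult_left_mono simp: algebra_simps)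
qed

lemma overlap_count_bounded_from_net:
  assumes net: "is_delta_net \<Lambda> \<delta> (K + T)"
    and weights: "\<forall>(xi, wi) \<in> set xs. xi \<in> K \<and> 0 \<le> wi"
    and bounded: "\<forall>l \<in> \<Lambda>. overlap_count (T + (\<lambda>v. \<delta> *\<^sub>R v) ` cball 0 1) xs l \<le> 1"
  shows "overlap_count T xs x \<le> 1"
proof (cases "x \<in> K + T")
  case True
  with net obtain l u where "l \<in> \<Lambda>" "u \<in> (\<lambda>v. \<delta> *\<^sub>R v) ` cball 0 1" "x = l + u"
    unfolding is_delta_net_def by (metis in_mono set_plus_elim)
  then obtain v where "l \<in> \<Lambda>" "v \<in> cball 0 1" "x = l + \<delta> *\<^sub>R v" by blast
  then have "overlap_count T xs x \<le> overlap_count (T + (\<lambda>v. \<delta> *\<^sub>R v) ` cball 0 1) xs l"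
    using weights by (auto intro: overlap_count_le_thickening)
  also have "\<dots> \<le> 1" using bounded \<open>l \<in> \<Lambda>\<close> by blast
  finally show ?thesis .
next
  case False
  moreover have "\<forall>(xi, wi) \<in> set xs. xi \<in> K" using weights by auto
  ultimately show ?thesis by (simp add: overlap_count_outside_sumset)
qed

theorem lemma2p3:
  fixes K T \<Lambda> :: "'a::euclidean_space set" and \<delta> :: real
  assumes "compact K" and "compact T" and "interior T \<noteq> {}"
    and "\<delta> > 0" and "finite \<Lambda>" and "is_delta_net \<Lambda> \<delta> (K + T)"
  shows "M_omega K T \<ge> M_omega_net K (T + (\<lambda>v. \<delta> *\<^sub>R v) ` cball 0 1) \<Lambda>"
proof -
  let ?S = "T + (\<lambda>v. \<delta> *\<^sub>R v) ` cball 0 1"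
  have "{xs. (\<forall>(xi, wi) \<in> set xs. xi \<in> \<Lambda> \<inter> K \<and> 0 \<le> wi) \<and> (\<forall>l \<in> \<Lambda>. overlap_count ?S xs l \<le> 1)}
        \<subseteq> {xs. (\<forall>(xi, wi) \<in> set xs. xi \<in> K \<and> 0 \<le> wi) \<and> (\<forall>x. overlap_count T xs x \<le> 1)}"
    using overlap_count_bounded_from_net[OF assms(6)] by fast
  then show ?thesis
    unfolding M_omega_def M_omega_net_def overlap_count_def[symmetric]
    by (rule SUP_subset_mono) simp
qed

end
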